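(* Let $(m_\epsilon)_{\epsilon\in(0,1)}$ be a family of dimensions satisfying Assumption P with constants $\epsilon_\theta$ and $K$. Then for all $\epsilon\in(0,\epsilon_\theta)$ and all $c\in(0,1/(8K))$, $$\mathbb E_{\theta^\circ}P_{\vartheta^{m_\epsilon}|Y}\Big(\|\vartheta^{m_\epsilon}-\theta^\circ\|^2>(4+\tfrac{11}{2}K)[b_{m_\epsilon}\vee\bar\sigma_{m_\epsilon}]\Big)\le2\exp(-m_\epsilon/36),$$ $$\mathbb E_{\theta^\circ}P_{\vartheta^{m_\epsilon}|Y}\Big(\|\vartheta^{m_\epsilon}-\theta^\circ\|^2<(1-8cK)[b_{m_\epsilon}\vee\bar\sigma_{m_\epsilon}]\Big)\le2\exp(-c^2m_\epsilon/2).$$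
   Context: Let $\ell^2$ be the space of square-summable real sequences with norm $\|\cdot\|$. Fix a bounded real sequence $\lambda=(\lambda_j)_{j\ge1}$ with $\lambda_j\ne0$ for all $j$, a noise level $\epsilon\in(0,1)$ and a true parameter $\theta^\circ\in\ell^2$. The data $Y=(Y_j)_{j\ge1}$ satisfy $Y_j=\lambda_j\theta^\circ_j+\sqrt\epsilon\,\xi_j$ with $\xi_j$ i.i.d. $N(0,1)$; $\mathbb E_{\theta^\circ}$, $P_{\theta^\circ}$ denote expectation and probability under this law. Fix prior means $\eta=(\eta_j)_{j\ge1}$ with $\theta^\circ-\eta\in\ell^2$ and prior variances $\tau_j\in(0,\infty)$ (possibly depending on $\epsilon$). For $m\in\mathbb N$ the sieve prior $P_{\vartheta^m}$ is the law of $\vartheta^m=(\vartheta^m_j)_{j\ge1}$ with independent coordinates, $\vartheta^m_j\sim N(\eta_j,\tau_j)$ for $j\le m$ and $\vartheta^m_j=\eta_j$ a.s. for $j>m$, in the model $Y_j=\lambda_j\vartheta^m_j+\sqrt\epsilon\xi_j$ with $\vartheta^m$ independent of $(\xi_j)$. Put $\sigma_j:=(\lambda_j^2\epsilon^{-1}+\tau_j^{-1})^{-1}$ and $\theta^Y_j:=\sigma_j(\tau_j^{-1}\eta_j+\lambda_j\epsilon^{-1}Y_j)$. The posterior $P_{\vartheta^m|Y}$ makes the coordinates independent with $\vartheta^m_j\sim N(\theta^Y_j,\sigma_j)$ for $j\le m$ and $\vartheta^m_j=\eta_j$ for $j>m$; the Bayes estimator is $\hat\theta^m:=\mathbb E[\vartheta^m|Y]$,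 i.e. $\hat\theta^m_j=\theta^Y_j$ for $j\le m$, $\hat\theta^m_j=\eta_j$ for $j>m$. Define $b_m:=\sum_{j>m}(\theta^\circ_j-\eta_j)^2$, $\bar\sigma_m:=\sum_{j=1}^m\sigma_j$, $\sigma_{(m)}:=\max_{1\le j\le m}\sigma_j$, $r_m:=\sum_{j=1}^m\sigma_j^2\tau_j^{-2}(\eta_j-\theta^\circ_j)^2$ (the quantities involving $\sigma$ depend on $\epsilon$). Assumption P for a family $(m_\epsilon)_{\epsilon\in(0,1)}\subset\mathbb N$: there exist constants $\epsilon_\theta\in(0,1)$ and $K\in[1,\infty)$ (depending on $\theta^\circ,\lambda,\eta,\tau$) such that $\sup_{0<\epsilon<\epsilon_\theta}(r_{m_\epsilon}\vee m_\epsilon\sigma_{(m_\epsilon)})/(b_{m_\epsilon}\vee\bar\sigma_{m_\epsilon})\le K$. *)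

theory Defs
  imports "HOL-Probability.Probability"
begin

text \<open>Coordinates are indexed from 0 (coordinate j here = coordinate j+1 of the paper).
  The sieve of dimension m randomises the coordinates j < m.\<close>

definition post_var :: "real \<Rightarrow> (nat \<Rightarrow> real) \<Rightarrow> (nat \<Rightarrow> real) \<Rightarrow> nat \<Rightarrow> real" where
  "post_var eps lam tau j = inverse ((lam j)\<^sup>2 / eps + inverse (tau j))"

definition post_mean :: "real \<Rightarrow> (nat \<Rightarrow> real) \<Rightarrow> (nat \<Rightarrow> real) \<Rightarrow> (nat \<Rightarrow> real)
    \<Rightarrow> (nat \<Rightarrow> real) \<Rightarrow> nat \<Rightarrow> real" where
  "post_mean eps lam eta tau Y j =
     post_var eps lam tau j * (eta j / tau j + lam j * Y j / eps)"

definition data_measure :: "real \<Rightarrow> (nat \<Rightarrow> real) \<Rightarrow> (nat \<Rightarrow> real) \<Rightarrow> (nat \<Rightarrow> real) measure" where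
  "data_measure eps lam theta =
     (\<Pi>\<^sub>M j\<in>UNIV. density lborel (normal_density (lam j * theta j) (sqrt eps)))"

definition post_measure :: "real \<Rightarrow> (nat \<Rightarrow> real) \<Rightarrow> (nat \<Rightarrow> real) \<Rightarrow> (nat \<Rightarrow> real) \<Rightarrow> nat
    \<Rightarrow> (nat \<Rightarrow> real) \<Rightarrow> (nat \<Rightarrow> real) measure" where
  "post_measure eps lam eta tau m Y =
     (\<Pi>\<^sub>M j\<in>UNIV. if j < m
        then density lborel (normal_density (post_mean eps lam eta tau Y j) (sqrt (post_var eps lam tau j)))
        else return borel (eta j))"

definition sqdist2 :: "(nat \<Rightarrow> real) \<Rightarrow> (nat \<Rightarrow> real) \<Rightarrow> real" where
  "sqdist2 x y = (\<Sum>j. (x j - y j)\<^sup>2)"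

definition bias :: "(nat \<Rightarrow> real) \<Rightarrow> (nat \<Rightarrow> real) \<Rightarrow> nat \<Rightarrow> real" where
  "bias theta eta m = (\<Sum>j. (theta (j + m) - eta (j + m))\<^sup>2)"

definition sigma_bar :: "real \<Rightarrow> (nat \<Rightarrow> real) \<Rightarrow> (nat \<Rightarrow> real) \<Rightarrow> nat \<Rightarrow> real" where
  "sigma_bar eps lam tau m = (\<Sum>j<m. post_var eps lam tau j)"

text \<open>Maximum of sigma_j over j < m (only used multiplied by m, so the value at m = 0 is irrelevant).\<close>
definition sigma_max :: "real \<Rightarrow> (nat \<Rightarrow> real) \<Rightarrow> (nat \<Rightarrow> real) \<Rightarrow> nat \<Rightarrow> real" where
  "sigma_max eps lam tau m = (MAX j\<in>{..<m}. post_var eps lam tau j)"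

definition r_term :: "real \<Rightarrow> (nat \<Rightarrow> real) \<Rightarrow> (nat \<Rightarrow> real) \<Rightarrow> (nat \<Rightarrow> real) \<Rightarrow> (nat \<Rightarrow> real) \<Rightarrow> nat \<Rightarrow> real" where
  "r_term eps lam theta eta tau m =
     (\<Sum>j<m. (post_var eps lam tau j)\<^sup>2 * (inverse (tau j))\<^sup>2 * (eta j - theta j)\<^sup>2)"

definition assumption_P :: "(nat \<Rightarrow> real) \<Rightarrow> (nat \<Rightarrow> real) \<Rightarrow> (nat \<Rightarrow> real) \<Rightarrow> (real \<Rightarrow> nat \<Rightarrow> real)
    \<Rightarrow> (real \<Rightarrow> nat) \<Rightarrow> real \<Rightarrow> real \<Rightarrow> bool" where
  "assumption_P lam theta eta tau m eps_theta K \<longleftrightarrow>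
     0 < eps_theta \<and> eps_theta < 1 \<and> 1 \<le> K \<and>
     (\<forall>eps\<in>{0<..<eps_theta}.
        max (r_term eps lam theta eta (tau eps) (m eps)) (real (m eps) * sigma_max eps lam (tau eps) (m eps))
        / max (bias theta eta (m eps)) (sigma_bar eps lam (tau eps) (m eps)) \<le> K)"

end

theory Submission
  imports Defs
begin

text \<open>Posterior almost surely the coordinates beyond the sieve equal the prior mean, so
  \<open>sqdist2 v theta\<close> is the bias plus a sum of \<open>m\<close> independent squares of Gaussians. Both tails
  are Chernoff bounds: the moment generating function of a squared Gaussian is explicit, and
  since the posterior mean is affine in the data it can be integrated once more against the
  Gaussian law of \<open>Y\<close>. Choosing the Chernoff parameter of order \<open>1 / sigma_max\<close> (upper tail), resp.
  \<open>2 c K / sigma_max\<close> or \<open>c m / (16 K bias)\<close> depending on which of bias and \<open>sigma_bar\<close>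
  dominates (lower tail), Assumption P turns the exponents into \<open>-m/36\<close> and \<open>-c\<^sup>2 m/2\<close>.\<close>

lemma gauss_completing_square:
  fixes mu S a b u x q :: real
  assumes S: "0 < S" and q: "0 < q" and qd: "q = 1 - 2 * u * b\<^sup>2 * S"
  shows "u * (a + b * x)\<^sup>2 - (x - mu)\<^sup>2 / (2 * S) =
    u * (a + b * mu)\<^sup>2 / q - (x - (mu + 2 * u * (a + b * mu) * b * S / q))\<^sup>2 / (2 * (S / q))"
proof -
  have poly: "2*S*q*u*(a+b*x)\<^sup>2 - q*(x-mu)\<^sup>2 = 2*S*u*(a+b*mu)\<^sup>2 - (q*(x-mu) - 2*u*(a+b*mu)*b*S)\<^sup>2"
    using qd by algebra
  have h: "q * (x - (mu + 2 * u * (a + b * mu) * b * S / q)) = q*(x-mu) - 2*u*(a+b*mu)*b*S"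
    using q by (simp add: field_simps)
  have h2: "(x - (mu + 2 * u * (a + b * mu) * b * S / q))\<^sup>2 / (2 * (S / q))
      = (q*(x-mu) - 2*u*(a+b*mu)*b*S)\<^sup>2 / (2*S*q)"
    unfolding h[symmetric] using q S by (simp add: field_simps power2_eq_square)
  have "u*(a+b*x)\<^sup>2 - (x-mu)\<^sup>2/(2*S) = (2*S*q*u*(a+b*x)\<^sup>2 - q*(x-mu)\<^sup>2)/(2*S*q)"
    using S q by (simp add: field_simps)
  also have "\<dots> = (2*S*u*(a+b*mu)\<^sup>2 - (q*(x-mu) - 2*u*(a+b*mu)*b*S)\<^sup>2)/(2*S*q)"
    using poly by simp
  also have "\<dots> = u*(a+b*mu)\<^sup>2/q - (q*(x-mu) - 2*u*(a+b*mu)*b*S)\<^sup>2/(2*S*q)"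
    using S q by (simp add: diff_divide_distrib)
  finally show ?thesis unfolding h2 .
qed

lemma nn_integral_normal_density: "0 < sg \<Longrightarrow> (\<integral>\<^sup>+x. ennreal (normal_density mu sg x) \<partial>lborel) = 1"
  by (subst nn_integral_eq_integral) auto

lemma nn_integral_exp_square_normal:
  fixes mu sg a b u :: real
  assumes sg: "0 < sg" and q: "0 < 1 - 2 * u * b\<^sup>2 * sg\<^sup>2"
  shows "(\<integral>\<^sup>+x. ennreal (exp (u * (a + b * x)\<^sup>2)) \<partial>density lborel (normal_density mu sg))
    = ennreal (exp (u * (a + b * mu)\<^sup>2 / (1 - 2 * u * b\<^sup>2 * sg\<^sup>2)) / sqrt (1 - 2 * u * b\<^sup>2 * sg\<^sup>2))"
proof -
  define q where "q = 1 - 2 * u * b\<^sup>2 * sg\<^sup>2"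
  have q0: "0 < q" using q by (simp add: q_def)
  define c where "c = mu + 2 * u * (a + b * mu) * b * sg\<^sup>2 / q"
  define s where "s = sg / sqrt q"
  have s0: "0 < s" using sg q0 by (simp add: s_def)
  have s2: "s\<^sup>2 = sg\<^sup>2 / q" using q0 by (simp add: s_def power_divide)
  define C where "C = exp (u * (a + b * mu)\<^sup>2 / q) / sqrt q"
  have C0: "0 \<le> C" using q0 by (simp add: C_def)
  have density_product: "normal_density mu sg x * exp (u * (a + b * x)\<^sup>2) = C * normal_density c s x" for x
  proof -
    have e: "u * (a + b * x)\<^sup>2 - (x - mu)\<^sup>2 / (2 * sg\<^sup>2) =
      u * (a + b * mu)\<^sup>2 / q - (x - c)\<^sup>2 / (2 * s\<^sup>2)"
      unfolding s2 c_def by (rule gauss_completing_square) (use sg q0 in \<open>auto simp: q_def\<close>)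
    have r: "sqrt (2 * pi * s\<^sup>2) = sqrt (2 * pi * sg\<^sup>2) / sqrt q"
      using q0 by (simp add: s2 real_sqrt_divide)
    have "normal_density mu sg x * exp (u * (a + b * x)\<^sup>2)
       = 1 / sqrt (2 * pi * sg\<^sup>2) * exp (u * (a + b * x)\<^sup>2 - (x - mu)\<^sup>2 / (2 * sg\<^sup>2))"
      by (simp add: normal_density_def exp_diff exp_minus field_simps)
    also have "\<dots> = 1 / sqrt (2 * pi * sg\<^sup>2) * exp (u * (a + b * mu)\<^sup>2 / q) * exp (- (x - c)\<^sup>2 / (2 * s\<^sup>2))"
      unfolding e by (simp add: exp_diff exp_minus field_simps)
    also have "\<dots> = C * normal_density c s x"
      unfolding normal_density_def C_def r using q0 sg by (simp add: field_simps)
    finally show ?thesis .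
  qed
  have "(\<integral>\<^sup>+x. ennreal (exp (u * (a + b * x)\<^sup>2)) \<partial>density lborel (normal_density mu sg))
     = (\<integral>\<^sup>+x. ennreal (normal_density mu sg x) * ennreal (exp (u * (a + b * x)\<^sup>2)) \<partial>lborel)"
    by (subst nn_integral_density) auto
  also have "\<dots> = (\<integral>\<^sup>+x. ennreal C * ennreal (normal_density c s x) \<partial>lborel)"
    by (intro nn_integral_cong) (simp add: density_product C0 ennreal_mult[symmetric])
  also have "\<dots> = ennreal C"
    using s0 by (simp add: nn_integral_cmult nn_integral_normal_density)
  finally show ?thesis by (simp add: C_def q_def)
qed

lemma nn_integral_PiM_prod:
  fixes M :: "nat \<Rightarrow> real measure" and g :: "nat \<Rightarrow> real \<Rightarrow> ennreal"
  assumes P: "\<And>i. prob_space (M i)" and J: "finite J"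
    and g: "\<And>j. j \<in> J \<Longrightarrow> g j \<in> borel_measurable (M j)"
  shows "(\<integral>\<^sup>+x. (\<Prod>j\<in>J. g j (x j)) \<partial>PiM UNIV M) = (\<Prod>j\<in>J. \<integral>\<^sup>+y. g j y \<partial>M j)"
proof -
  interpret product_prob_space M UNIV
    by (simp add: product_prob_space_def product_prob_space_axioms_def product_sigma_finite_def
        P prob_space_imp_sigma_finite)
  have meas: "(\<lambda>y. \<Prod>j\<in>J. g j (y j)) \<in> borel_measurable (PiM J M)"
    using g by measurable
  have "(\<integral>\<^sup>+x. (\<Prod>j\<in>J. g j (x j)) \<partial>PiM UNIV M) = (\<integral>\<^sup>+x. (\<Prod>j\<in>J. g j (restrict x J j)) \<partial>PiM UNIV M)"
    by (intro nn_integral_cong prod.cong) auto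
  also have "\<dots> = (\<integral>\<^sup>+y. (\<Prod>j\<in>J. g j (y j)) \<partial>distr (PiM UNIV M) (PiM J M) (\<lambda>x. restrict x J))"
    by (rule nn_integral_distr[symmetric])
       (auto intro: meas simp del: restrict_apply simp add: measurable_restrict_subset)
  also have "\<dots> = (\<integral>\<^sup>+y. (\<Prod>j\<in>J. g j (y j)) \<partial>PiM J M)"
    by (subst distr_PiM_restrict_finite) (use J in auto)
  also have "\<dots> = (\<Prod>j\<in>J. \<integral>\<^sup>+y. g j y \<partial>M j)"
    by (rule product_nn_integral_prod[OF J g])
  finally show ?thesis .
qed

lemma emeasure_PiM_sum_greater_le:
  fixes M :: "nat \<Rightarrow> real measure" and f :: "nat \<Rightarrow> real \<Rightarrow> real"
  assumes P: "\<And>i. prob_space (M i)" and L: "0 \<le> L"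
    and f: "\<And>j. j < m \<Longrightarrow> f j \<in> borel_measurable (M j)"
  shows "emeasure (PiM UNIV M) {v \<in> space (PiM UNIV M). T < (\<Sum>j<m. f j (v j)) + b}
    \<le> ennreal (exp (L * (b - T))) * (\<Prod>j<m. \<integral>\<^sup>+x. ennreal (exp (L * f j x)) \<partial>M j)"
proof -
  let ?A = "{v \<in> space (PiM UNIV M). T < (\<Sum>j<m. f j (v j)) + b}"
  have A: "?A \<in> sets (PiM UNIV M)"
    using f by measurable
  have f_comp: "(\<lambda>v. ennreal (exp (L * f j (v j)))) \<in> borel_measurable (PiM UNIV M)" if "j < m" for j
    using measurable_compose[OF measurable_component_singleton[of j UNIV M] f] that by measurable
  have "emeasure (PiM UNIV M) ?A = (\<integral>\<^sup>+v. indicator ?A v \<partial>PiM UNIV M)"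
    using A by simp
  also have "\<dots> \<le> (\<integral>\<^sup>+v. ennreal (exp (L * (b - T))) * (\<Prod>j<m. ennreal (exp (L * f j (v j)))) \<partial>PiM UNIV M)"
  proof (intro nn_integral_mono)
    fix v
    have "indicator ?A v \<le> ennreal (exp (L * (b - T)) * exp (L * (\<Sum>j<m. f j (v j))))"
    proof (cases "v \<in> ?A")
      case True
      then have "0 \<le> L * ((\<Sum>j<m. f j (v j)) + b - T)" using L by auto
      then have "1 \<le> exp (L * ((\<Sum>j<m. f j (v j)) + b - T))" by simp
      also have "\<dots> = exp (L * (b - T)) * exp (L * (\<Sum>j<m. f j (v j)))"
        by (simp add: exp_add[symmetric] algebra_simps)
      finally show ?thesis using True by simp
    qed simp
    then show "indicator ?A v \<le> ennreal (exp (L * (b - T))) * (\<Prod>j<m. ennreal (exp (L * f j (v j))))"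
      by (simp add: prod_ennreal exp_sum sum_distrib_left ennreal_mult'[symmetric])
  qed
  also have "\<dots> = ennreal (exp (L * (b - T))) * (\<integral>\<^sup>+v. (\<Prod>j<m. ennreal (exp (L * f j (v j)))) \<partial>PiM UNIV M)"
    using f_comp by (intro nn_integral_cmult borel_measurable_prod_ennreal) auto
  also have "(\<integral>\<^sup>+v. (\<Prod>j<m. ennreal (exp (L * f j (v j)))) \<partial>PiM UNIV M)
      = (\<Prod>j<m. \<integral>\<^sup>+x. ennreal (exp (L * f j x)) \<partial>M j)"
    using f by (intro nn_integral_PiM_prod P) auto
  finally show ?thesis .
qed

lemma emeasure_PiM_sum_less_le:
  fixes M :: "nat \<Rightarrow> real measure" and f :: "nat \<Rightarrow> real \<Rightarrow> real"
  assumes P: "\<And>i. prob_space (M i)" and L: "0 \<le> L"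
    and f: "\<And>j. j < m \<Longrightarrow> f j \<in> borel_measurable (M j)"
  shows "emeasure (PiM UNIV M) {v \<in> space (PiM UNIV M). (\<Sum>j<m. f j (v j)) + b < T}
    \<le> ennreal (exp (L * (T - b))) * (\<Prod>j<m. \<integral>\<^sup>+x. ennreal (exp ((- L) * f j x)) \<partial>M j)"
proof -
  have f': "\<And>j. j < m \<Longrightarrow> (\<lambda>x. - f j x) \<in> borel_measurable (M j)" using f by measurable
  have "{v \<in> space (PiM UNIV M). (\<Sum>j<m. f j (v j)) + b < T}
      = {v \<in> space (PiM UNIV M). - T < (\<Sum>j<m. - f j (v j)) + - b}"
    by (auto simp: sum_negf)
  also have "emeasure (PiM UNIV M) \<dots>
      \<le> ennreal (exp (L * (- b - - T))) * (\<Prod>j<m. \<integral>\<^sup>+x. ennreal (exp (L * - f j x)) \<partial>M j)"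
    by (rule emeasure_PiM_sum_greater_le[OF P L f'])
  finally show ?thesis by simp
qed

lemma post_var_pos: "0 < e \<Longrightarrow> 0 < tau j \<Longrightarrow> 0 < post_var e lam tau j"
  unfolding post_var_def by (simp add: add_nonneg_pos)

lemma post_var_mult_precision:
  assumes "0 < e" "0 < tau j"
  shows "post_var e lam tau j * ((lam j)\<^sup>2 / e + 1 / tau j) = 1"
proof -
  have "0 < (lam j)\<^sup>2 / e + 1 / tau j" using assms by (simp add: add_nonneg_pos)
  then show ?thesis unfolding post_var_def by (simp add: inverse_eq_divide)
qed

lemma post_var_sq_mult_le:
  assumes e: "0 < e" and tau: "0 < tau j"
  shows "(post_var e lam tau j)\<^sup>2 * (lam j)\<^sup>2 / e \<le> post_var e lam tau j"
proof -
  have s0: "0 < post_var e lam tau j" using post_var_pos[of e tau j lam] e tau by simp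
  have "post_var e lam tau j * ((lam j)\<^sup>2 / e) \<le> post_var e lam tau j * ((lam j)\<^sup>2 / e + 1 / tau j)"
    using s0 tau by (intro mult_left_mono) auto
  then have "post_var e lam tau j * ((lam j)\<^sup>2 / e) \<le> 1"
    using post_var_mult_precision[of e tau j lam] e tau by simp
  from mult_left_mono[OF this less_imp_le[OF s0]] show ?thesis
    by (simp add: power2_eq_square)
qed

definition post_factor :: "real \<Rightarrow> (nat \<Rightarrow> real) \<Rightarrow> (nat \<Rightarrow> real) \<Rightarrow> (nat \<Rightarrow> real) \<Rightarrow> nat
    \<Rightarrow> (nat \<Rightarrow> real) \<Rightarrow> nat \<Rightarrow> real measure" where
  "post_factor eps lam eta tau m Y j = (if j < m
     then density lborel (normal_density (post_mean eps lam eta tau Y j) (sqrt (post_var eps lam tau j)))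
     else return borel (eta j))"

lemma post_factor_head:
  "j < m \<Longrightarrow> post_factor eps lam eta tau m Y j
     = density lborel (normal_density (post_mean eps lam eta tau Y j) (sqrt (post_var eps lam tau j)))"
  unfolding post_factor_def by simp

lemma post_factor_tail: "m \<le> j \<Longrightarrow> post_factor eps lam eta tau m Y j = return borel (eta j)"
  unfolding post_factor_def by simp

lemma post_measure_eq_PiM: "post_measure eps lam eta tau m Y = PiM UNIV (post_factor eps lam eta tau m Y)"
  unfolding post_measure_def post_factor_def ..

lemma prob_space_post_factor:
  "0 < post_var eps lam tau j \<Longrightarrow> prob_space (post_factor eps lam eta tau m Y j)"
  unfolding post_factor_def by (auto intro: prob_space_normal_density prob_space_return)

lemma sets_post_factor: "sets (post_factor eps lam eta tau m Y j) = sets borel"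
  unfolding post_factor_def by auto

lemma measurable_post_factor_component [measurable]:
  "(\<lambda>x. x j) \<in> borel_measurable (PiM UNIV (post_factor eps lam eta tau m Y))"
  using measurable_component_singleton[of j UNIV] measurable_cong_sets[OF refl sets_post_factor] by blast

lemma AE_post_measure_tail:
  assumes pv: "\<And>j. 0 < post_var eps lam tau j"
  shows "AE v in post_measure eps lam eta tau m Y. \<forall>j. m \<le> j \<longrightarrow> v j = eta j"
  unfolding post_measure_eq_PiM AE_all_countable
proof
  fix j :: nat
  show "AE v in PiM UNIV (post_factor eps lam eta tau m Y). m \<le> j \<longrightarrow> v j = eta j"
  proof (cases "m \<le> j")
    case True
    have "AE x in post_factor eps lam eta tau m Y j. x = eta j"
      unfolding post_factor_tail[OF True] by (simp add: AE_return)
    then show ?thesis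
      using AE_PiM_component[where I=UNIV and i=j and P="\<lambda>x. x = eta j"]
      by (simp add: prob_space_post_factor pv)
  qed simp
qed

lemma bias_nonneg: "summable (\<lambda>j. (theta j - eta j)\<^sup>2) \<Longrightarrow> 0 \<le> bias theta eta m"
  unfolding bias_def
  by (rule suminf_nonneg) (auto simp: summable_iff_shift[of "\<lambda>j. (theta j - eta j)\<^sup>2" m])

lemma sqdist2_eq_head_plus_bias:
  assumes d: "summable (\<lambda>j. (theta j - eta j)\<^sup>2)" and v: "\<forall>j. m \<le> j \<longrightarrow> v j = eta j"
  shows "sqdist2 v theta = (\<Sum>j<m. (v j - theta j)\<^sup>2) + bias theta eta m"
proof -
  have tail: "(\<lambda>j. (v (j + m) - theta (j + m))\<^sup>2) = (\<lambda>j. (theta (j + m) - eta (j + m))\<^sup>2)"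
    using v by (auto simp: power2_commute)
  have "summable (\<lambda>j. (theta (j + m) - eta (j + m))\<^sup>2)"
    using summable_iff_shift[of "\<lambda>j. (theta j - eta j)\<^sup>2" m] d by simp
  then have "summable (\<lambda>j. (v j - theta j)\<^sup>2)"
    using summable_iff_shift[of "\<lambda>j. (v j - theta j)\<^sup>2" m] tail by simp
  from suminf_split_initial_segment[OF this, of m] show ?thesis
    unfolding sqdist2_def bias_def tail by simp
qed

lemma emeasure_post_sqdist_le_head:
  assumes d: "summable (\<lambda>j. (theta j - eta j)\<^sup>2)"
    and pv: "\<And>j. 0 < post_var eps lam tau j"
    and B: "{v \<in> space (post_measure eps lam eta tau m Y). P ((\<Sum>j<m. (v j - theta j)\<^sup>2) + bias theta eta m)}
       \<in> sets (post_measure eps lam eta tau m Y)"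
  shows "emeasure (post_measure eps lam eta tau m Y) {v \<in> space (post_measure eps lam eta tau m Y). P (sqdist2 v theta)}
    \<le> emeasure (post_measure eps lam eta tau m Y)
        {v \<in> space (post_measure eps lam eta tau m Y). P ((\<Sum>j<m. (v j - theta j)\<^sup>2) + bias theta eta m)}"
  by (rule emeasure_mono_AE[OF _ B], rule AE_mp[OF AE_post_measure_tail[OF pv]])
     (auto simp: sqdist2_eq_head_plus_bias[OF d])

lemma nn_integral_post_factor_exp_square:
  assumes j: "j < m" and pv: "0 < post_var e lam tau j" and q: "0 < 1 - 2 * u * post_var e lam tau j"
  shows "(\<integral>\<^sup>+x. ennreal (exp (u * (x - theta j)\<^sup>2)) \<partial>post_factor e lam eta tau m Y j)
    = ennreal (exp (u * (post_mean e lam eta tau Y j - theta j)\<^sup>2 / (1 - 2 * u * post_var e lam tau j))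
        / sqrt (1 - 2 * u * post_var e lam tau j))"
  using nn_integral_exp_square_normal[where sg="sqrt (post_var e lam tau j)" and u=u and b=1
      and a="- theta j" and mu="post_mean e lam eta tau Y j"] pv q j
  by (simp add: post_factor_head)

lemma emeasure_post_sqdist_greater_le:
  assumes d: "summable (\<lambda>j. (theta j - eta j)\<^sup>2)"
    and pv: "\<And>j. 0 < post_var e lam tau j"
    and L: "0 \<le> L" and q: "\<And>j. j < m \<Longrightarrow> 2 * L * post_var e lam tau j < 1"
  shows "emeasure (post_measure e lam eta tau m Y) {v \<in> space (post_measure e lam eta tau m Y). T < sqdist2 v theta}
    \<le> ennreal (exp (L * (bias theta eta m - T))) *
       (\<Prod>j<m. ennreal (exp (L * (post_mean e lam eta tau Y j - theta j)\<^sup>2 / (1 - 2 * L * post_var e lam tau j))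
            / sqrt (1 - 2 * L * post_var e lam tau j)))"
proof -
  let ?M = "post_factor e lam eta tau m Y"
  have "emeasure (post_measure e lam eta tau m Y) {v \<in> space (post_measure e lam eta tau m Y). T < sqdist2 v theta}
     \<le> emeasure (PiM UNIV ?M) {v \<in> space (PiM UNIV ?M). T < (\<Sum>j<m. (v j - theta j)\<^sup>2) + bias theta eta m}"
    using emeasure_post_sqdist_le_head[OF d pv, where P="\<lambda>t. T < t"]
    unfolding post_measure_eq_PiM by measurable
  also have "\<dots> \<le> ennreal (exp (L * (bias theta eta m - T))) *
      (\<Prod>j<m. \<integral>\<^sup>+x. ennreal (exp (L * (x - theta j)\<^sup>2)) \<partial>?M j)"
    by (rule emeasure_PiM_sum_greater_le[OF prob_space_post_factor[OF pv] L])
       (simp add: measurable_cong_sets[OF sets_post_factor refl])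
  also have "(\<Prod>j<m. \<integral>\<^sup>+x. ennreal (exp (L * (x - theta j)\<^sup>2)) \<partial>?M j)
     = (\<Prod>j<m. ennreal (exp (L * (post_mean e lam eta tau Y j - theta j)\<^sup>2 / (1 - 2 * L * post_var e lam tau j))
            / sqrt (1 - 2 * L * post_var e lam tau j)))"
    using q by (intro prod.cong refl nn_integral_post_factor_exp_square pv) auto
  finally show ?thesis .
qed

lemma emeasure_post_sqdist_less_le:
  assumes d: "summable (\<lambda>j. (theta j - eta j)\<^sup>2)"
    and pv: "\<And>j. 0 < post_var e lam tau j" and L: "0 \<le> L"
  shows "emeasure (post_measure e lam eta tau m Y) {v \<in> space (post_measure e lam eta tau m Y). sqdist2 v theta < T}
    \<le> ennreal (exp (L * (T - bias theta eta m))) * (\<Prod>j<m. ennreal (1 / sqrt (1 + 2 * L * post_var e lam tau j)))"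
proof -
  let ?M = "post_factor e lam eta tau m Y"
  have "emeasure (post_measure e lam eta tau m Y) {v \<in> space (post_measure e lam eta tau m Y). sqdist2 v theta < T}
     \<le> emeasure (PiM UNIV ?M) {v \<in> space (PiM UNIV ?M). (\<Sum>j<m. (v j - theta j)\<^sup>2) + bias theta eta m < T}"
    using emeasure_post_sqdist_le_head[OF d pv, where P="\<lambda>t. t < T"]
    unfolding post_measure_eq_PiM by measurable
  also have "\<dots> \<le> ennreal (exp (L * (T - bias theta eta m))) *
      (\<Prod>j<m. \<integral>\<^sup>+x. ennreal (exp ((- L) * (x - theta j)\<^sup>2)) \<partial>?M j)"
    by (rule emeasure_PiM_sum_less_le[OF prob_space_post_factor[OF pv] L])
       (simp add: measurable_cong_sets[OF sets_post_factor refl])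
  also have "(\<Prod>j<m. \<integral>\<^sup>+x. ennreal (exp ((- L) * (x - theta j)\<^sup>2)) \<partial>?M j)
     \<le> (\<Prod>j<m. ennreal (1 / sqrt (1 + 2 * L * post_var e lam tau j)))"
  proof (rule prod_mono_ennreal)
    fix j assume j: "j \<in> {..<m}"
    have q: "0 < 1 + 2 * L * post_var e lam tau j" using L pv[of j] by (simp add: add_pos_nonneg)
    have "exp ((- L) * (post_mean e lam eta tau Y j - theta j)\<^sup>2 / (1 + 2 * L * post_var e lam tau j)) \<le> 1"
      using L q by (simp add: divide_nonpos_pos mult_nonpos_nonneg)
    then show "(\<integral>\<^sup>+x. ennreal (exp ((- L) * (x - theta j)\<^sup>2)) \<partial>?M j)
        \<le> ennreal (1 / sqrt (1 + 2 * L * post_var e lam tau j))"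
      using nn_integral_post_factor_exp_square[of j m e lam tau "- L"] j pv[of j] q
      by (simp add: divide_right_mono ennreal_leI)
  qed
  finally show ?thesis by (simp add: mult_left_mono)
qed

text \<open>The posterior moment generating function of one coordinate, averaged over its datum \<open>y\<close>.\<close>
lemma nn_integral_post_mgf_data:
  fixes e \<tau> \<sigma> l L \<eta> \<theta> :: real
  assumes e: "0 < e" and tau: "0 < \<tau>" and hs: "\<sigma> * (l\<^sup>2 / e + 1 / \<tau>) = 1"
    and q1: "0 < 1 - 2 * L * \<sigma>" and qv: "0 < 1 - 2 * L * (\<sigma> + \<sigma>\<^sup>2 * l\<^sup>2 / e)"
  shows "(\<integral>\<^sup>+y. ennreal (exp (L * (\<sigma> * (\<eta> / \<tau> + l * y / e) - \<theta>)\<^sup>2 / (1 - 2 * L * \<sigma>)) / sqrt (1 - 2 * L * \<sigma>))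
      \<partial>density lborel (normal_density (l * \<theta>) (sqrt e)))
    = ennreal (exp (L * (\<sigma> / \<tau> * (\<eta> - \<theta>))\<^sup>2 / (1 - 2 * L * (\<sigma> + \<sigma>\<^sup>2 * l\<^sup>2 / e)))
        / sqrt (1 - 2 * L * (\<sigma> + \<sigma>\<^sup>2 * l\<^sup>2 / e)))"
proof -
  define q where "q = 1 - 2 * L * \<sigma>"
  define Q where "Q = 1 - 2 * L * (\<sigma> + \<sigma>\<^sup>2 * l\<^sup>2 / e)"
  define u where "u = L / q"
  define A where "A = \<sigma> * \<eta> / \<tau> - \<theta>"
  define B where "B = \<sigma> * l / e"
  define q' where "q' = 1 - 2 * u * B\<^sup>2 * (sqrt e)\<^sup>2"
  have q_pos: "0 < q" using q1 by (simp add: q_def)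
  have Q_pos: "0 < Q" using qv by (simp add: Q_def)
  have q_mult: "q * q' = Q"
    unfolding q'_def u_def B_def Q_def q_def using e q1 by (simp add: field_simps power2_eq_square)
  have q'_pos: "0 < q'" using q_mult q_pos Q_pos by (metis zero_less_mult_pos)
  have mean_shift: "A + B * (l * \<theta>) = \<sigma> / \<tau> * (\<eta> - \<theta>)"
  proof -
    have "A + B * (l * \<theta>) - \<sigma> / \<tau> * (\<eta> - \<theta>) = \<theta> * (\<sigma> * (l\<^sup>2 / e + 1 / \<tau>) - 1)"
      unfolding A_def B_def using e tau by (simp add: field_simps power2_eq_square)
    then show ?thesis using hs by simp
  qed
  have integrand_eq: "ennreal (exp (L * (\<sigma> * (\<eta> / \<tau> + l * y / e) - \<theta>)\<^sup>2 / (1 - 2 * L * \<sigma>)) / sqrt (1 - 2 * L * \<sigma>))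
     = ennreal (1 / sqrt q) * ennreal (exp (u * (A + B * y)\<^sup>2))" for y
  proof -
    have "\<sigma> * (\<eta> / \<tau> + l * y / e) - \<theta> = A + B * y" unfolding A_def B_def by (simp add: field_simps)
    then show ?thesis using q_pos unfolding u_def q_def
      by (simp add: ennreal_mult[symmetric] divide_inverse mult.commute mult.left_commute)
  qed
  have "(\<integral>\<^sup>+y. ennreal (exp (L * (\<sigma> * (\<eta> / \<tau> + l * y / e) - \<theta>)\<^sup>2 / (1 - 2 * L * \<sigma>)) / sqrt (1 - 2 * L * \<sigma>))
      \<partial>density lborel (normal_density (l * \<theta>) (sqrt e)))
    = (\<integral>\<^sup>+y. ennreal (1 / sqrt q) * ennreal (exp (u * (A + B * y)\<^sup>2)) \<partial>density lborel (normal_density (l * \<theta>) (sqrt e)))"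
    by (simp only: integrand_eq)
  also have "\<dots> = ennreal (1 / sqrt q) * (\<integral>\<^sup>+y. ennreal (exp (u * (A + B * y)\<^sup>2)) \<partial>density lborel (normal_density (l * \<theta>) (sqrt e)))"
    by (rule nn_integral_cmult) auto
  also have "\<dots> = ennreal (1 / sqrt q) * ennreal (exp (u * (A + B * (l * \<theta>))\<^sup>2 / q') / sqrt q')"
    unfolding q'_def using e q'_pos by (subst nn_integral_exp_square_normal) (auto simp: q'_def)
  also have "\<dots> = ennreal (1 / sqrt q * (exp (u * (A + B * (l * \<theta>))\<^sup>2 / q') / sqrt q'))"
    using q_pos q'_pos by (subst ennreal_mult) auto
  also have "1 / sqrt q * (exp (u * (A + B * (l * \<theta>))\<^sup>2 / q') / sqrt q') = exp (L * (\<sigma> / \<tau> * (\<eta> - \<theta>))\<^sup>2 / Q) / sqrt Q"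
  proof -
    have "u * (A + B * (l * \<theta>))\<^sup>2 / q' = L * (\<sigma> / \<tau> * (\<eta> - \<theta>))\<^sup>2 / Q"
      unfolding mean_shift u_def q_mult[symmetric] using q_pos q'_pos by (simp add: field_simps)
    moreover have "sqrt q * sqrt q' = sqrt Q" using q_mult by (simp add: real_sqrt_mult[symmetric])
    ultimately show ?thesis by (simp add: field_simps)
  qed
  finally show ?thesis by (simp add: Q_def)
qed

lemma prob_space_data_measure: "0 < e \<Longrightarrow> prob_space (data_measure e lam theta)"
  unfolding data_measure_def by (intro prob_space_PiM prob_space_normal_density) simp

lemma inverse_sqrt_one_minus_le_exp:
  fixes x :: real assumes "0 \<le> x" "x \<le> 1/2"
  shows "1 / sqrt (1 - x) \<le> exp x"
proof -
  have "0 \<le> x * (1 - 2 * x)" using assms by simp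
  then have "1 \<le> (1 - x) * (1 + 2 * x)" by (simp add: algebra_simps)
  also have "\<dots> \<le> (1 - x) * exp (2 * x)" using assms by (intro mult_left_mono) auto
  finally have h: "1 \<le> (1 - x) * exp (2 * x)" .
  have "exp (2 * x) = (exp x)\<^sup>2" by (simp add: power2_eq_square exp_add[symmetric])
  then have "sqrt ((1 - x) * exp (2 * x)) = sqrt (1 - x) * exp x" by (simp add: real_sqrt_mult)
  then have "1 \<le> sqrt (1 - x) * exp x" using real_sqrt_le_mono[OF h] by simp
  moreover have "0 < sqrt (1 - x)" using assms by simp
  ultimately show ?thesis by (simp add: divide_le_eq mult.commute)
qed

lemma inverse_sqrt_one_plus_le_exp:
  fixes x :: real assumes "0 \<le> x" "x \<le> 1"
  shows "1 / sqrt (1 + x) \<le> exp (- x / 2 + x\<^sup>2 / 2)"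
proof -
  have "x - x\<^sup>2 \<le> ln (1 + x)" by (rule ln_one_plus_pos_lower_bound) (use assms in auto)
  then have h: "exp (x - x\<^sup>2) \<le> 1 + x" using assms by (simp add: ln_ge_iff)
  have "exp (x - x\<^sup>2) = (exp ((x - x\<^sup>2)/2))\<^sup>2" by (simp add: power2_eq_square exp_add[symmetric])
  then have s: "exp ((x - x\<^sup>2)/2) \<le> sqrt (1 + x)" using real_sqrt_le_mono[OF h] by simp
  have "1 = exp ((x - x\<^sup>2)/2) * exp (- x / 2 + x\<^sup>2 / 2)" by (simp add: exp_add[symmetric] field_simps)
  also have "\<dots> \<le> sqrt (1 + x) * exp (- x / 2 + x\<^sup>2 / 2)" using s by (intro mult_right_mono) auto
  finally have "1 \<le> sqrt (1 + x) * exp (- x / 2 + x\<^sup>2 / 2)" .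
  moreover have "0 < sqrt (1 + x)" using assms by simp
  ultimately show ?thesis by (simp add: divide_le_eq mult.commute)
qed

lemma mgf_factor_le_exp:
  fixes \<sigma> w L a :: real
  assumes w: "0 \<le> w" "w \<le> \<sigma>" and L: "0 \<le> L" and L\<sigma>: "8 * L * \<sigma> \<le> 1"
  shows "exp (L * a\<^sup>2 / (1 - 2 * L * (\<sigma> + w))) / sqrt (1 - 2 * L * (\<sigma> + w)) \<le> exp (2 * L * a\<^sup>2 + 4 * L * \<sigma>)"
proof -
  define Q where "Q = 1 - 2 * L * (\<sigma> + w)"
  have small: "4 * L * \<sigma> \<le> 1/2" using L\<sigma> by simp
  have nonneg: "0 \<le> 4 * L * \<sigma>" using L w by simp
  have Q_ge: "1 - 4 * L * \<sigma> \<le> Q"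
    using mult_left_mono[OF w(2) L] unfolding Q_def by (simp add: algebra_simps)
  have Q_half: "1/2 \<le> Q" using Q_ge small by simp
  have "exp (L * a\<^sup>2 / Q) \<le> exp (2 * L * a\<^sup>2)"
    using divide_left_mono[of "1/2" Q "L * a\<^sup>2"] Q_half L by simp
  moreover have "1 / sqrt Q \<le> exp (4 * L * \<sigma>)"
  proof -
    have "1 / sqrt Q \<le> 1 / sqrt (1 - 4 * L * \<sigma>)"
      using Q_ge small by (intro divide_left_mono real_sqrt_le_mono mult_pos_pos) auto
    also have "\<dots> \<le> exp (4 * L * \<sigma>)" by (rule inverse_sqrt_one_minus_le_exp[OF nonneg small])
    finally show ?thesis .
  qed
  ultimately have "exp (L * a\<^sup>2 / Q) * (1 / sqrt Q) \<le> exp (2 * L * a\<^sup>2) * exp (4 * L * \<sigma>)"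
    using Q_half by (intro mult_mono) auto
  then show ?thesis unfolding Q_def by (simp add: exp_add)
qed

lemma inverse_sqrt_factor_le_exp:
  fixes \<sigma> L S :: real
  assumes \<sigma>: "0 \<le> \<sigma>" "\<sigma> \<le> S" and L: "0 \<le> L" and LS: "2 * L * S \<le> 1"
  shows "1 / sqrt (1 + 2 * L * \<sigma>) \<le> exp (L * ((2 * L * S - 1) * \<sigma>))"
proof -
  have L\<sigma>: "L * \<sigma> \<le> L * S" using \<sigma> L by (simp add: mult_left_mono)
  have "1 / sqrt (1 + 2 * L * \<sigma>) \<le> exp (- (2 * L * \<sigma>) / 2 + (2 * L * \<sigma>)\<^sup>2 / 2)"
    using L\<sigma> LS \<sigma> L by (intro inverse_sqrt_one_plus_le_exp) auto
  also have "\<dots> \<le> exp (L * ((2 * L * S - 1) * \<sigma>))"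
  proof -
    have "(L * \<sigma>) * (L * \<sigma>) \<le> (L * S) * (L * \<sigma>)"
      using L\<sigma> L \<sigma> by (intro mult_right_mono) auto
    then show ?thesis by (simp add: power2_eq_square algebra_simps)
  qed
  finally show ?thesis .
qed

lemma ennreal_exp_mult_prod_exp:
  "finite A \<Longrightarrow> ennreal (exp x) * (\<Prod>j\<in>A. ennreal (exp (f j))) = ennreal (exp (x + (\<Sum>j\<in>A. f j)))"
  by (simp add: prod_ennreal exp_sum exp_add ennreal_mult')

lemma nn_integral_post_mgf_data_le_exp:
  assumes e: "0 < e" and tau: "0 < tau j" and L: "0 \<le> L"
    and Ls: "8 * L * post_var e lam tau j \<le> 1"
  shows "(\<integral>\<^sup>+y. ennreal (exp (L * (post_var e lam tau j * (eta j / tau j + lam j * y / e) - theta j)\<^sup>2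
        / (1 - 2 * L * post_var e lam tau j)) / sqrt (1 - 2 * L * post_var e lam tau j))
      \<partial>density lborel (normal_density (lam j * theta j) (sqrt e)))
    \<le> ennreal (exp (2 * L * (post_var e lam tau j / tau j * (eta j - theta j))\<^sup>2 + 4 * L * post_var e lam tau j))"
proof -
  let ?s = "post_var e lam tau j" and ?w = "(post_var e lam tau j)\<^sup>2 * (lam j)\<^sup>2 / e"
  have ws: "?w \<le> ?s" using post_var_sq_mult_le[of e tau j lam] e tau by simp
  have w0: "0 \<le> ?w" using e by simp
  have "0 < 1 - 2 * L * (?s + ?w)"
    using mult_left_mono[OF ws L] Ls by (simp add: algebra_simps)
  moreover have "0 < 1 - 2 * L * ?s" using Ls by linarith
  ultimately show ?thesis
    using w0 ws L Ls
    by (simp add: nn_integral_post_mgf_data[OF e tau post_var_mult_precision[of e tau j lam, OF e tau]]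
        mgf_factor_le_exp ennreal_leI)
qed

lemma r_term_eq: "r_term e lam theta eta tau m = (\<Sum>j<m. (post_var e lam tau j / tau j * (eta j - theta j))\<^sup>2)"
  unfolding r_term_def
  by (intro sum.cong) (auto simp: power_mult_distrib inverse_eq_divide power_divide power2_commute)

lemma post_var_le_sigma_max: "j < m \<Longrightarrow> post_var e lam tau j \<le> sigma_max e lam tau m"
  unfolding sigma_max_def by (rule Max_ge) auto

lemma sigma_max_pos: "0 < e \<Longrightarrow> (\<And>j. 0 < tau j) \<Longrightarrow> 0 < m \<Longrightarrow> 0 < sigma_max e lam tau m"
  using post_var_le_sigma_max[of 0 m e lam tau] post_var_pos[of e tau 0 lam] by simp

lemma sigma_bar_pos: "0 < e \<Longrightarrow> (\<And>j. 0 < tau j) \<Longrightarrow> 0 < m \<Longrightarrow> 0 < sigma_bar e lam tau m"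
  unfolding sigma_bar_def by (intro sum_pos) (auto intro: post_var_pos)

lemma nn_integral_post_sqdist_greater_le:
  assumes d: "summable (\<lambda>j. (theta j - eta j)\<^sup>2)"
    and e: "0 < e" and tau: "\<And>j. 0 < tau j" and L: "0 \<le> L"
    and Ls: "\<And>j. j < m \<Longrightarrow> 8 * L * post_var e lam tau j \<le> 1"
  shows "(\<integral>\<^sup>+Y. emeasure (post_measure e lam eta tau m Y) {v \<in> space (post_measure e lam eta tau m Y). T < sqdist2 v theta}
      \<partial>data_measure e lam theta)
    \<le> ennreal (exp (L * (bias theta eta m - T + 2 * r_term e lam theta eta tau m + 4 * sigma_bar e lam tau m)))"
proof -
  let ?s = "post_var e lam tau" and ?a = "\<lambda>j. post_var e lam tau j / tau j * (eta j - theta j)"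
  define G where "G j y = ennreal (exp (L * (?s j * (eta j / tau j + lam j * y / e) - theta j)\<^sup>2
      / (1 - 2 * L * ?s j)) / sqrt (1 - 2 * L * ?s j))" for j y
  define D where "D j = density lborel (normal_density (lam j * theta j) (sqrt e))" for j
  have s0: "0 < ?s j" for j by (rule post_var_pos[OF e tau])
  have q1: "2 * L * ?s j < 1" if "j < m" for j
    using Ls[OF that] by linarith
  have [measurable]: "(\<lambda>Y. Y j) \<in> borel_measurable (PiM UNIV D)" for j
    using measurable_component_singleton[of j UNIV D] by (simp add: D_def)
  have "(\<integral>\<^sup>+Y. emeasure (post_measure e lam eta tau m Y) {v \<in> space (post_measure e lam eta tau m Y). T < sqdist2 v theta}
      \<partial>data_measure e lam theta)
    \<le> (\<integral>\<^sup>+Y. ennreal (exp (L * (bias theta eta m - T))) * (\<Prod>j<m. G j (Y j)) \<partial>PiM UNIV D)"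
  proof (unfold data_measure_def D_def[symmetric], rule nn_integral_mono)
    fix Y :: "nat \<Rightarrow> real"
    show "emeasure (post_measure e lam eta tau m Y) {v \<in> space (post_measure e lam eta tau m Y). T < sqdist2 v theta}
      \<le> ennreal (exp (L * (bias theta eta m - T))) * (\<Prod>j<m. G j (Y j))"
      using emeasure_post_sqdist_greater_le[OF d s0 L, where m=m and T=T and Y=Y] q1
      unfolding G_def post_mean_def by (simp add: algebra_simps)
  qed
  also have "\<dots> = ennreal (exp (L * (bias theta eta m - T))) * (\<Prod>j<m. \<integral>\<^sup>+y. G j y \<partial>D j)"
    unfolding G_def
    by (subst nn_integral_cmult, measurable, subst nn_integral_PiM_prod)
       (use e in \<open>auto simp: D_def intro: prob_space_normal_density\<close>)
  also have "\<dots> \<le> ennreal (exp (L * (bias theta eta m - T))) *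
      (\<Prod>j<m. ennreal (exp (2 * L * (?a j)\<^sup>2 + 4 * L * ?s j)))"
    unfolding G_def D_def using Ls by (intro mult_left_mono prod_mono_ennreal nn_integral_post_mgf_data_le_exp e tau L) auto
  also have "\<dots> = ennreal (exp (L * (bias theta eta m - T) + (\<Sum>j<m. 2 * L * (?a j)\<^sup>2 + 4 * L * ?s j)))"
    by (simp add: ennreal_exp_mult_prod_exp)
  also have "L * (bias theta eta m - T) + (\<Sum>j<m. 2 * L * (?a j)\<^sup>2 + 4 * L * ?s j)
      = L * (bias theta eta m - T + 2 * r_term e lam theta eta tau m + 4 * sigma_bar e lam tau m)"
    by (simp add: r_term_eq sigma_bar_def sum.distrib sum_distrib_left algebra_simps)
  finally show ?thesis .
qed

lemma nn_integral_post_sqdist_less_le: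
  assumes d: "summable (\<lambda>j. (theta j - eta j)\<^sup>2)"
    and e: "0 < e" and tau: "\<And>j. 0 < tau j" and L: "0 \<le> L"
    and sS: "\<And>j. j < m \<Longrightarrow> post_var e lam tau j \<le> S" and LS: "2 * L * S \<le> 1"
  shows "(\<integral>\<^sup>+Y. emeasure (post_measure e lam eta tau m Y) {v \<in> space (post_measure e lam eta tau m Y). sqdist2 v theta < T}
      \<partial>data_measure e lam theta)
    \<le> ennreal (exp (L * (T - bias theta eta m + (2 * L * S - 1) * sigma_bar e lam tau m)))"
proof -
  interpret D: prob_space "data_measure e lam theta" by (rule prob_space_data_measure[OF e])
  have s0: "0 < post_var e lam tau j" for j by (rule post_var_pos[OF e tau])
  have "(\<integral>\<^sup>+Y. emeasure (post_measure e lam eta tau m Y) {v \<in> space (post_measure e lam eta tau m Y). sqdist2 v theta < T}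
      \<partial>data_measure e lam theta)
    \<le> (\<integral>\<^sup>+Y. ennreal (exp (L * (T - bias theta eta m))) *
        (\<Prod>j<m. ennreal (1 / sqrt (1 + 2 * L * post_var e lam tau j))) \<partial>data_measure e lam theta)"
    by (intro nn_integral_mono emeasure_post_sqdist_less_le[OF d s0 L])
  also have "\<dots> = ennreal (exp (L * (T - bias theta eta m))) *
      (\<Prod>j<m. ennreal (1 / sqrt (1 + 2 * L * post_var e lam tau j)))"
    by (simp add: D.emeasure_space_1)
  also have "\<dots> \<le> ennreal (exp (L * (T - bias theta eta m))) *
      (\<Prod>j<m. ennreal (exp (L * ((2 * L * S - 1) * post_var e lam tau j))))"
    using s0 sS L LS
    by (intro mult_left_mono prod_mono_ennreal ennreal_leI inverse_sqrt_factor_le_exp) (auto intro: less_imp_le)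
  also have "\<dots> = ennreal (exp (L * (T - bias theta eta m) + (\<Sum>j<m. L * ((2 * L * S - 1) * post_var e lam tau j))))"
    by (simp add: ennreal_exp_mult_prod_exp)
  also have "L * (T - bias theta eta m) + (\<Sum>j<m. L * ((2 * L * S - 1) * post_var e lam tau j))
      = L * (T - bias theta eta m + (2 * L * S - 1) * sigma_bar e lam tau m)"
    by (simp add: sigma_bar_def sum_distrib_left distrib_left)
  finally show ?thesis .
qed

lemma nn_integral_post_emeasure_le_1:
  assumes e: "0 < e" and tau: "\<And>j. 0 < tau j"
  shows "(\<integral>\<^sup>+Y. emeasure (post_measure e lam eta tau m Y) (A Y) \<partial>data_measure e lam theta) \<le> 1"
proof -
  interpret D: prob_space "data_measure e lam theta" by (rule prob_space_data_measure[OF e])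
  have "prob_space (post_measure e lam eta tau m Y)" for Y
    unfolding post_measure_eq_PiM
    by (intro prob_space_PiM prob_space_post_factor post_var_pos[OF e tau])
  then have "(\<integral>\<^sup>+Y. emeasure (post_measure e lam eta tau m Y) (A Y) \<partial>data_measure e lam theta)
      \<le> (\<integral>\<^sup>+Y. 1 \<partial>data_measure e lam theta)"
    by (intro nn_integral_mono prob_space.emeasure_le_1)
  then show ?thesis by (simp add: D.emeasure_space_1)
qed

lemma posterior_sqdist_upper_tail:
  assumes d: "summable (\<lambda>j. (theta j - eta j)\<^sup>2)"
    and e: "0 < e" and tau: "\<And>j. 0 < tau j" and K: "1 \<le> K"
    and r: "r_term e lam theta eta tau m \<le> K * max (bias theta eta m) (sigma_bar e lam tau m)"
    and s: "real m * sigma_max e lam tau m \<le> K * max (bias theta eta m) (sigma_bar e lam tau m)"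
  shows "(\<integral>\<^sup>+Y. emeasure (post_measure e lam eta tau m Y)
      {v \<in> space (post_measure e lam eta tau m Y).
         sqdist2 v theta > (4 + 11 / 2 * K) * max (bias theta eta m) (sigma_bar e lam tau m)}
      \<partial>data_measure e lam theta) \<le> ennreal (2 * exp (- real m / 36))"
proof (cases "m = 0")
  case True
  then show ?thesis
    using order_trans[OF nn_integral_post_emeasure_le_1[where tau=tau, OF e tau], of "ennreal 2"] by simp
next
  case False
  define b r sb smax where "b = bias theta eta m" and "r = r_term e lam theta eta tau m"
    and "sb = sigma_bar e lam tau m" and "smax = sigma_max e lam tau m"
  define M where "M = max b sb"
  have smax_pos: "0 < smax" unfolding smax_def using sigma_max_pos[OF e tau] False by simp
  define L where "L = 1 / (8 * smax)"
  have L: "0 \<le> L" "8 * L * smax = 1" unfolding L_def using smax_pos by auto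
  have M0: "0 \<le> M" using bias_nonneg[OF d, of m] unfolding M_def b_def by simp
  have M: "b \<le> M" "sb \<le> M" "M \<le> K * M"
    using mult_right_mono[OF K M0] unfolding M_def by auto
  have "r \<le> K * M" "real m * smax \<le> K * M"
    using r s unfolding M_def b_def r_def sb_def smax_def by simp_all
  then have "b - (4 + 11 / 2 * K) * M + 2 * r + 4 * sb \<le> - 5 / 2 * (real m * smax)"
    using M by (simp add: algebra_simps)
  then have "L * (b - (4 + 11 / 2 * K) * M + 2 * r + 4 * sb) \<le> L * (- 5 / 2 * (real m * smax))"
    by (rule mult_left_mono[OF _ L(1)])
  also have "\<dots> = - 5 / 16 * real m" unfolding L_def using smax_pos by (simp add: field_simps)
  also have "\<dots> \<le> - real m / 36" by simp
  finally have exponent: "L * (b - (4 + 11 / 2 * K) * M + 2 * r + 4 * sb) \<le> - real m / 36" .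
  have "8 * L * post_var e lam tau j \<le> 1" if "j < m" for j
    using mult_left_mono[OF post_var_le_sigma_max[OF that, of e lam tau] L(1)] L(2)
    unfolding smax_def by simp
  then have "(\<integral>\<^sup>+Y. emeasure (post_measure e lam eta tau m Y)
      {v \<in> space (post_measure e lam eta tau m Y). (4 + 11 / 2 * K) * M < sqdist2 v theta}
      \<partial>data_measure e lam theta) \<le> ennreal (exp (L * (b - (4 + 11 / 2 * K) * M + 2 * r + 4 * sb)))"
    unfolding b_def r_def sb_def by (rule nn_integral_post_sqdist_greater_le[OF d e tau L(1)])
  also have "\<dots> \<le> ennreal (2 * exp (- real m / 36))"
    using exp_mono[OF exponent] exp_ge_zero[of "- real m / 36"] by (intro ennreal_leI) linarith
  finally show ?thesis unfolding M_def b_def sb_def by simp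
qed

lemma posterior_sqdist_lower_tail:
  assumes d: "summable (\<lambda>j. (theta j - eta j)\<^sup>2)"
    and e: "0 < e" and tau: "\<And>j. 0 < tau j" and K: "1 \<le> K"
    and s: "real m * sigma_max e lam tau m \<le> K * max (bias theta eta m) (sigma_bar e lam tau m)"
    and c: "0 < c" "c < 1 / (8 * K)"
  shows "(\<integral>\<^sup>+Y. emeasure (post_measure e lam eta tau m Y)
      {v \<in> space (post_measure e lam eta tau m Y).
         sqdist2 v theta < (1 - 8 * c * K) * max (bias theta eta m) (sigma_bar e lam tau m)}
      \<partial>data_measure e lam theta) \<le> ennreal (2 * exp (- c\<^sup>2 * real m / 2))"
proof (cases "m = 0")
  case True
  then show ?thesis
    using order_trans[OF nn_integral_post_emeasure_le_1[where tau=tau, OF e tau], of "ennreal 2"] by simp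
next
  case False
  define b sb smax where "b = bias theta eta m" and "sb = sigma_bar e lam tau m"
    and "smax = sigma_max e lam tau m"
  define T where "T = (1 - 8 * c * K) * max b sb"
  have smax_pos: "0 < smax" unfolding smax_def using sigma_max_pos[OF e tau] False by simp
  have sb_pos: "0 < sb" unfolding sb_def using sigma_bar_pos[OF e tau] False by simp
  have cK: "8 * c * K < 1" using c K by (simp add: field_simps)
  have b0: "0 \<le> b" unfolding b_def by (rule bias_nonneg[OF d])
  have "\<exists>L\<ge>0. 2 * L * smax \<le> 1 \<and> L * (T - b + (2 * L * smax - 1) * sb) \<le> - c\<^sup>2 * real m / 2"
  proof (cases "sb \<le> b")
    case True
    have b_pos: "0 < b" using True sb_pos by simp
    define L where "L = c * real m / (16 * K * b)"
    have L0: "0 \<le> L" unfolding L_def using c K b_pos by simp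
    have "real m * smax \<le> K * b" using s True unfolding b_def sb_def smax_def by simp
    then have "2 * L * smax \<le> c / 8"
      unfolding L_def using b_pos K c by (simp add: field_simps mult_left_mono)
    moreover have "8 * c \<le> 8 * c * K" using mult_left_mono[OF K, of "8 * c"] c by simp
    ultimately have LS: "2 * L * smax \<le> 1" using cK by linarith
    have "L * (T - b + (2 * L * smax - 1) * sb) = L * (T - b) + L * ((2 * L * smax - 1) * sb)"
      by (simp add: algebra_simps)
    also have "\<dots> \<le> L * (T - b)"
      using LS L0 sb_pos by (simp add: mult_nonneg_nonpos mult_nonpos_nonneg)
    also have "\<dots> = - c\<^sup>2 * real m / 2"
      unfolding T_def L_def using True b_pos K by (simp add: field_simps power2_eq_square)
    finally show ?thesis using L0 LS by blast
  next
    case False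
    define L where "L = 2 * c * K / smax"
    have L0: "0 \<le> L" unfolding L_def using c K smax_pos by simp
    have LS: "2 * L * smax \<le> 1" unfolding L_def using smax_pos cK by simp
    have "real m * smax \<le> K * sb" using s False unfolding b_def sb_def smax_def by simp
    then have m_le: "real m \<le> K * sb / smax" using smax_pos by (simp add: field_simps)
    have "L * (T - b + (2 * L * smax - 1) * sb) = L * (- 4 * c * K * sb - b)"
      unfolding T_def L_def using False smax_pos by (simp add: field_simps)
    also have "\<dots> \<le> L * (- 4 * c * K * sb)" using L0 b0 by (intro mult_left_mono) auto
    also have "\<dots> = - (8 * c\<^sup>2 * K) * (K * sb / smax)"
      unfolding L_def using smax_pos by (simp add: field_simps power2_eq_square)
    also have "\<dots> \<le> - (8 * c\<^sup>2 * K) * real m"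
      using m_le K by (intro mult_left_mono_neg) auto
    also have "\<dots> \<le> - c\<^sup>2 * real m / 2"
    proof -
      have x0: "0 \<le> c\<^sup>2 * real m" by simp
      then have "c\<^sup>2 * real m \<le> K * (c\<^sup>2 * real m)" using mult_right_mono[OF K] by simp
      with x0 have "c\<^sup>2 * real m / 2 \<le> 8 * (K * (c\<^sup>2 * real m))" by linarith
      then show ?thesis by (simp add: algebra_simps)
    qed
    finally show ?thesis using L0 LS by blast
  qed
  then obtain L where L: "0 \<le> L" "2 * L * smax \<le> 1"
    and exponent: "L * (T - b + (2 * L * smax - 1) * sb) \<le> - c\<^sup>2 * real m / 2" by blast
  have "(\<integral>\<^sup>+Y. emeasure (post_measure e lam eta tau m Y)
      {v \<in> space (post_measure e lam eta tau m Y). sqdist2 v theta < T} \<partial>data_measure e lam theta)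
    \<le> ennreal (exp (L * (T - b + (2 * L * smax - 1) * sb)))"
    unfolding b_def sb_def
    by (rule nn_integral_post_sqdist_less_le[OF d e tau L(1) _ L(2)])
       (simp add: post_var_le_sigma_max smax_def)
  also have "\<dots> \<le> ennreal (2 * exp (- c\<^sup>2 * real m / 2))"
    using exp_mono[OF exponent] exp_ge_zero[of "- c\<^sup>2 * real m / 2"] by (intro ennreal_leI) linarith
  finally show ?thesis unfolding T_def b_def sb_def by simp
qed

lemma assumption_P_bounds:
  assumes P: "assumption_P lam theta eta tau m eps_theta K"
    and eps: "0 < eps" "eps < eps_theta" and tau: "\<And>j. 0 < tau eps j"
  shows "max (r_term eps lam theta eta (tau eps) (m eps)) (real (m eps) * sigma_max eps lam (tau eps) (m eps))
    \<le> K * max (bias theta eta (m eps)) (sigma_bar eps lam (tau eps) (m eps))"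
proof (cases "m eps = 0")
  case True
  have "0 \<le> K" using P unfolding assumption_P_def by simp
  then show ?thesis using True by (simp add: r_term_def sigma_bar_def)
next
  case False
  then have "0 < max (bias theta eta (m eps)) (sigma_bar eps lam (tau eps) (m eps))"
    using sigma_bar_pos[of eps "tau eps" "m eps" lam] eps tau by (simp add: max.strict_coboundedI2)
  moreover have "max (r_term eps lam theta eta (tau eps) (m eps)) (real (m eps) * sigma_max eps lam (tau eps) (m eps))
      / max (bias theta eta (m eps)) (sigma_bar eps lam (tau eps) (m eps)) \<le> K"
    using P eps unfolding assumption_P_def by auto
  ultimately show ?thesis by (simp only: pos_divide_le_eq mult.commute)
qed

theorem mainTheorem3:
  fixes lam theta eta :: "nat \<Rightarrow> real"
    and tau :: "real \<Rightarrow> nat \<Rightarrow> real"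
    and m :: "real \<Rightarrow> nat"
    and eps_theta K eps c :: real
  assumes lam_bdd: "\<exists>B. \<forall>j. \<bar>lam j\<bar> \<le> B"
    and lam_nz: "\<And>j. lam j \<noteq> 0"
    and theta_l2: "summable (\<lambda>j. (theta j)\<^sup>2)"
    and diff_l2: "summable (\<lambda>j. (theta j - eta j)\<^sup>2)"
    and tau_pos: "\<And>e j. 0 < e \<Longrightarrow> e < 1 \<Longrightarrow> 0 < tau e j"
    and P: "assumption_P lam theta eta tau m eps_theta K"
    and eps: "0 < eps" "eps < eps_theta"
    and c: "0 < c" "c < 1 / (8 * K)"
  shows
    "(\<integral>\<^sup>+ Y. emeasure (post_measure eps lam eta (tau eps) (m eps) Y)
         {v \<in> space (post_measure eps lam eta (tau eps) (m eps) Y).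
            sqdist2 v theta > (4 + 11 / 2 * K) *
              max (bias theta eta (m eps)) (sigma_bar eps lam (tau eps) (m eps))}
       \<partial>data_measure eps lam theta) \<le> ennreal (2 * exp (- real (m eps) / 36))
   \<and> (\<integral>\<^sup>+ Y. emeasure (post_measure eps lam eta (tau eps) (m eps) Y)
         {v \<in> space (post_measure eps lam eta (tau eps) (m eps) Y).
            sqdist2 v theta < (1 - 8 * c * K) *
              max (bias theta eta (m eps)) (sigma_bar eps lam (tau eps) (m eps))}
       \<partial>data_measure eps lam theta) \<le> ennreal (2 * exp (- c\<^sup>2 * real (m eps) / 2))"
proof -
  have K: "1 \<le> K" and "eps < 1" using P eps unfolding assumption_P_def by auto
  then have tau: "\<And>j. 0 < tau eps j" using tau_pos eps by auto
  have bounds: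
    "r_term eps lam theta eta (tau eps) (m eps) \<le> K * max (bias theta eta (m eps)) (sigma_bar eps lam (tau eps) (m eps))"
    "real (m eps) * sigma_max eps lam (tau eps) (m eps) \<le> K * max (bias theta eta (m eps)) (sigma_bar eps lam (tau eps) (m eps))"
    using assumption_P_bounds[OF P eps tau] by simp_all
  show ?thesis
    using posterior_sqdist_upper_tail[OF diff_l2 eps(1) tau K bounds]
      posterior_sqdist_lower_tail[OF diff_l2 eps(1) tau K bounds(2) c]
    by blast
qed

end
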